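(* Let $m,n,p,q$ be positive integers and $G=K_{m,n}\vee K_{p,q}$. Then $$\tau(G)=(m+n+p+q)^2(m+p+q)^{n-1}(n+p+q)^{m-1}(p+m+n)^{q-1}(q+m+n)^{p-1}.$$
   Context: $K_{m,n}$ is the complete bipartite graph with parts of sizes $m$ and $n$. The join $G_1\vee G_2$ has vertex set $V(G_1)\sqcup V(G_2)$ and edge set $E(G_1)\cup E(G_2)\cup\{uv:u\in V(G_1),v\in V(G_2)\}$. $\tau(G)$ is the number of spanning trees of $G$. *)

theory Defs
  imports Main
begin

definition connected_by :: "'a set \<Rightarrow> 'a set set \<Rightarrow> bool" where
  "connected_by V F \<longleftrightarrow>
     (\<forall>u\<in>V. \<forall>v\<in>V. (u, v) \<in> {(x, y). {x, y} \<in> F}\<^sup>*)"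

definition acyclic_edges :: "'a set set \<Rightarrow> bool" where
  "acyclic_edges F \<longleftrightarrow>
     (\<forall>x y. {x, y} \<in> F \<and> x \<noteq> y \<longrightarrow> (x, y) \<notin> {(a, b). {a, b} \<in> F - {{x, y}}}\<^sup>*)"

definition spanning_tree :: "'a set \<Rightarrow> 'a set set \<Rightarrow> 'a set set \<Rightarrow> bool" where
  "spanning_tree V E T \<longleftrightarrow> T \<subseteq> E \<and> connected_by V T \<and> acyclic_edges T"

definition num_spanning_trees :: "'a set \<Rightarrow> 'a set set \<Rightarrow> nat" where
  "num_spanning_trees V E = card {T. spanning_tree V E T}"

definition Kbip_V :: "nat \<Rightarrow> nat \<Rightarrow> (nat + nat) set" where
  "Kbip_V m n = Inl ` {..<m} \<union> Inr ` {..<n}"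

definition Kbip_E :: "nat \<Rightarrow> nat \<Rightarrow> (nat + nat) set set" where
  "Kbip_E m n = {{Inl i, Inr j} | i j. i < m \<and> j < n}"

definition join_V :: "'a set \<Rightarrow> 'b set \<Rightarrow> ('a + 'b) set" where
  "join_V V1 V2 = Inl ` V1 \<union> Inr ` V2"

definition join_E :: "'a set \<Rightarrow> 'a set set \<Rightarrow> 'b set \<Rightarrow> 'b set set \<Rightarrow> ('a + 'b) set set" where
  "join_E V1 E1 V2 E2 =
     (\<lambda>e. Inl ` e) ` E1 \<union> (\<lambda>e. Inr ` e) ` E2 \<union> {{Inl u, Inr v} | u v. u \<in> V1 \<and> v \<in> V2}"

end

theory Submission
  imports Defs "Jordan_Normal_Form.Determinant"
begin

text \<open>
  Spanning trees rooted at a vertex \<open>r\<close> are the same as parent maps, which send every other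
  vertex to its neighbour towards \<open>r\<close>.  Expanding \<open>det (x I + L)\<close> multilinearly in the rows
  gives one term for each map choosing, for every vertex, either the vertex itself or a
  neighbour; the term vanishes unless the map is a rooted spanning forest, and then it is \<open>x\<close>
  to the number of roots.  So the coefficient of \<open>x\<close> counts the forests with a single root:
  it is \<open>N \<tau>\<close> for a graph with \<open>N\<close> vertices.

  \<open>K\<^sub>m\<^sub>,\<^sub>n \<or> K\<^sub>p\<^sub>,\<^sub>q\<close> is the complete 4-partite graph with parts of sizes \<open>m, n, p, q\<close>.  For a
  complete multipartite graph with \<open>k\<close> parts of sizes \<open>a\<^sub>b\<close>, unitriangular row and column
  operations make \<open>x I + L\<close> upper triangular with diagonal entries \<open>x\<close>, then \<open>x + N\<close> repeated
  \<open>k - 1\<close> times, and \<open>x + N - a\<^sub>b\<close> repeated \<open>a\<^sub>b - 1\<close> times for each part \<open>b\<close>.  Reading off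
  the coefficient of \<open>x\<close> gives \<open>\<tau> = N ^ (k - 2) * (\<Prod>b. (N - a\<^sub>b) ^ (a\<^sub>b - 1))\<close>.
\<close>

section \<open>Spanning trees as parent maps\<close>

definition simple_graph :: "'a set \<Rightarrow> 'a set set \<Rightarrow> bool" where
  "simple_graph V E \<longleftrightarrow> (\<forall>e\<in>E. \<exists>u v. e = {u, v} \<and> u \<in> V \<and> v \<in> V \<and> u \<noteq> v)"

lemma simple_graphE:
  assumes "simple_graph V E" "e \<in> E"
  obtains u v where "e = {u, v}" "u \<in> V" "v \<in> V" "u \<noteq> v"
  using assms unfolding simple_graph_def by blast

lemma simple_graph_subset: "simple_graph V E \<Longrightarrow> T \<subseteq> E \<Longrightarrow> simple_graph V T"
  unfolding simple_graph_def by blast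

lemma sym_edge_rel: "sym {(x, y). {x, y} \<in> F}"
  by (auto intro: symI simp: insert_commute)

lemma funpow_fixpoint: "f r = r \<Longrightarrow> (f ^^ k) r = r"
  by (induction k) auto

lemma periodic_point_reaching_fixpoint:
  assumes "f r = r" "(f ^^ j) v = r" "(f ^^ p) v = v" "0 < p"
  shows "v = r"
proof -
  have "v = ((f ^^ p) ^^ j) v"
    using assms(3) by (simp add: funpow_fixpoint)
  also have "\<dots> = (f ^^ (p * j - j + j)) v"
    using assms(4) by (simp add: funpow_mult)
  also have "\<dots> = (f ^^ (p * j - j)) r"
    using assms(2) by (simp add: funpow_add)
  also have "\<dots> = r"
    using assms(1) by (rule funpow_fixpoint)
  finally show ?thesis .
qed

lemma ex_funpow_step_iff:
  assumes "\<not> P u"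
  shows "(\<exists>k. P ((f ^^ k) u)) \<longleftrightarrow> (\<exists>k. P ((f ^^ k) (f u)))"
proof
  assume "\<exists>k. P ((f ^^ k) u)"
  then obtain k where k: "P ((f ^^ k) u)" by blast
  with assms obtain k' where "k = Suc k'" by (cases k) auto
  with k show "\<exists>k. P ((f ^^ k) (f u))" by (auto simp: funpow_swap1)
next
  assume "\<exists>k. P ((f ^^ k) (f u))"
  then obtain k where "P ((f ^^ Suc k) u)" by (auto simp: funpow_swap1)
  then show "\<exists>k. P ((f ^^ k) u)" by blast
qed

lemma edge_rel_rtrancl_mono:
  assumes "A \<subseteq> B" "(x, y) \<in> {(a, b). {a, b} \<in> A}\<^sup>*"
  shows "(x, y) \<in> {(a, b). {a, b} \<in> B}\<^sup>*"
proof -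
  have "{(a, b). {a, b} \<in> A} \<subseteq> {(a, b). {a, b} \<in> B}"
    using assms(1) by blast
  with assms(2) show ?thesis
    using rtrancl_mono by blast
qed

definition parent_maps :: "'a set \<Rightarrow> 'a set set \<Rightarrow> 'a \<Rightarrow> ('a \<Rightarrow> 'a) set" where
  "parent_maps V E r = {f. (\<forall>v. v \<notin> V \<longrightarrow> f v = v) \<and> f r = r \<and> (\<forall>v\<in>V - {r}. {v, f v} \<in> E)
     \<and> (\<forall>v\<in>V. \<exists>k. (f ^^ k) v = r)}"

definition parent_edges :: "'a set \<Rightarrow> 'a \<Rightarrow> ('a \<Rightarrow> 'a) \<Rightarrow> 'a set set" where
  "parent_edges V r f = {{v, f v} | v. v \<in> V - {r}}"

lemma parent_mapsD:
  assumes "f \<in> parent_maps V E r"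
  shows parent_map_outside: "v \<notin> V \<Longrightarrow> f v = v"
    and parent_map_root: "f r = r"
    and parent_map_edge: "v \<in> V \<Longrightarrow> v \<noteq> r \<Longrightarrow> {v, f v} \<in> E"
    and parent_map_reaches_root: "v \<in> V \<Longrightarrow> \<exists>k. (f ^^ k) v = r"
  using assms unfolding parent_maps_def by blast+

lemma parent_maps_mono: "E \<subseteq> E' \<Longrightarrow> parent_maps V E r \<subseteq> parent_maps V E' r"
  unfolding parent_maps_def by blast

lemma parent_edges_subset:
  assumes "f \<in> parent_maps V E r"
  shows "parent_edges V r f \<subseteq> E"
  unfolding parent_edges_def using parent_map_edge[OF assms] by blast

lemma parent_map_in_V:
  assumes "simple_graph V E" "f \<in> parent_maps V E r" "r \<in> V" "v \<in> V"
  shows "f v \<in> V"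
proof (cases "v = r")
  case True
  with parent_map_root[OF assms(2)] assms(3) show ?thesis by simp
next
  case False
  with parent_map_edge[OF assms(2) assms(4)] have "{v, f v} \<in> E" .
  with assms(1) obtain a b where "{v, f v} = {a, b}" "a \<in> V" "b \<in> V"
    by (rule simple_graphE)
  then show ?thesis by (auto simp: doubleton_eq_iff)
qed

lemma connected_parent_edges:
  assumes "simple_graph V E" "f \<in> parent_maps V E r" "r \<in> V"
  shows "connected_by V (parent_edges V r f)"
proof -
  let ?R = "{(x, y). {x, y} \<in> parent_edges V r f}"
  have step: "(w, f w) \<in> ?R\<^sup>*" if "w \<in> V" for w
  proof (cases "w = r")
    case True
    then show ?thesis using parent_map_root[OF assms(2)] by simp
  next
    case False
    then have "{w, f w} \<in> parent_edges V r f"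
      using that unfolding parent_edges_def by blast
    then show ?thesis by (intro r_into_rtrancl) simp
  qed
  have path: "(v, (f ^^ k) v) \<in> ?R\<^sup>* \<and> (f ^^ k) v \<in> V" if "v \<in> V" for v k
  proof (induction k)
    case (Suc k)
    then have "(f ^^ k) v \<in> V" "(v, (f ^^ k) v) \<in> ?R\<^sup>*" by simp_all
    then show ?case
      using rtrancl_trans[OF _ step] parent_map_in_V[OF assms] by auto
  qed (use that in simp)
  have to_root: "(v, r) \<in> ?R\<^sup>*" if "v \<in> V" for v
    using parent_map_reaches_root[OF assms(2) that] path[OF that] by metis
  show ?thesis
    unfolding connected_by_def
  proof (intro ballI)
    fix u v assume "u \<in> V" "v \<in> V"
    have "sym (?R\<^sup>*)"
      using sym_edge_rel by (rule sym_rtrancl)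
    then have "(r, v) \<in> ?R\<^sup>*"
      using to_root[OF \<open>v \<in> V\<close>] by (rule symD)
    with to_root[OF \<open>u \<in> V\<close>] show "(u, v) \<in> ?R\<^sup>*" by (rule rtrancl_trans)
  qed
qed

text \<open>Deleting the edge \<open>{v, f v}\<close> separates the vertices whose \<open>f\<close>-orbit passes through \<open>v\<close>
  from the others; \<open>f v\<close> is among the others because \<open>v \<noteq> r\<close> is not periodic.\<close>
lemma acyclic_parent_edges:
  assumes f: "f \<in> parent_maps V E r"
  shows "acyclic_edges (parent_edges V r f)"
  unfolding acyclic_edges_def
proof (intro allI impI)
  fix x y assume "{x, y} \<in> parent_edges V r f \<and> x \<noteq> y"
  then obtain v where v: "v \<in> V" "v \<noteq> r" and xy: "{x, y} = {v, f v}"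
    unfolding parent_edges_def by blast
  let ?R = "{(a, b). {a, b} \<in> parent_edges V r f - {{x, y}}}"
  define D where "D = {u. \<exists>k. (f ^^ k) u = v}"
  have same_side: "a \<in> D \<longleftrightarrow> b \<in> D" if "(a, b) \<in> ?R" for a b
  proof -
    from that obtain u where "{a, b} = {u, f u}" "u \<noteq> v"
      unfolding parent_edges_def using xy by auto
    moreover have "u \<in> D \<longleftrightarrow> f u \<in> D"
      unfolding D_def using ex_funpow_step_iff[of "\<lambda>w. w = v"] \<open>u \<noteq> v\<close> by blast
    ultimately show ?thesis by (auto simp: doubleton_eq_iff)
  qed
  have preserved: "x \<in> D \<longleftrightarrow> z \<in> D" if "(x, z) \<in> ?R\<^sup>*" for z
    using that by (induction rule: rtrancl_induct) (use same_side in blast)+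
  have "v \<in> D"
    unfolding D_def by (auto intro: exI[of _ 0])
  moreover have "f v \<notin> D"
  proof
    assume "f v \<in> D"
    then obtain k where "(f ^^ Suc k) v = v"
      unfolding D_def by (auto simp: funpow_swap1)
    moreover obtain j where "(f ^^ j) v = r"
      using parent_map_reaches_root[OF f v(1)] by blast
    ultimately show False
      using periodic_point_reaching_fixpoint[of f r, OF parent_map_root[OF f]] v(2) by blast
  qed
  ultimately have "x \<in> D \<longleftrightarrow> y \<notin> D"
    using xy by (auto simp: doubleton_eq_iff)
  with preserved show "(x, y) \<notin> ?R\<^sup>*" by blast
qed

lemma spanning_tree_parent_edges:
  assumes "simple_graph V E" "f \<in> parent_maps V E r" "r \<in> V"
  shows "spanning_tree V E (parent_edges V r f)"
  unfolding spanning_tree_def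
  using parent_edges_subset[OF assms(2)] connected_parent_edges[OF assms]
    acyclic_parent_edges[OF assms(2)]
  by blast

lemma parent_edges_eq_disagree_step:
  assumes f: "f \<in> parent_maps V E r" and g: "g \<in> parent_maps V E r"
    and eq: "parent_edges V r f = parent_edges V r g" and v: "v \<in> V" "f v \<noteq> g v"
  shows "g v \<in> V \<and> f (g v) \<noteq> g (g v)"
proof -
  have "v \<noteq> r"
    using v parent_map_root[OF f] parent_map_root[OF g] by auto
  then have "{v, g v} \<in> parent_edges V r f"
    using eq v(1) unfolding parent_edges_def by blast
  then obtain u where u: "u \<in> V" "u \<noteq> r" "{v, g v} = {u, f u}"
    unfolding parent_edges_def by blast
  with v(2) have gv: "g v = u" "f u = v"
    by (auto simp: doubleton_eq_iff)
  have "g (g v) \<noteq> v"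
  proof
    assume "g (g v) = v"
    then have "(g ^^ 2) v = v" by (simp add: numeral_2_eq_2)
    moreover obtain j where "(g ^^ j) v = r"
      using parent_map_reaches_root[OF g v(1)] by blast
    ultimately show False
      using periodic_point_reaching_fixpoint[of g r, OF parent_map_root[OF g]] \<open>v \<noteq> r\<close> by fastforce
  qed
  then show ?thesis using gv u by auto
qed

text \<open>If two parent maps disagree at \<open>v\<close>, they also disagree at the parent of \<open>v\<close>; following
  the parents to the root, where both agree, gives a contradiction.\<close>
lemma inj_on_parent_edges: "inj_on (parent_edges V r) (parent_maps V E r)"
proof
  fix f g assume f: "f \<in> parent_maps V E r" and g: "g \<in> parent_maps V E r"
    and eq: "parent_edges V r f = parent_edges V r g"
  show "f = g"
  proof
    fix v
    show "f v = g v"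
    proof (rule ccontr)
      assume ne: "f v \<noteq> g v"
      then have v: "v \<in> V"
        using parent_map_outside[OF f] parent_map_outside[OF g] by metis
      have "(g ^^ k) v \<in> V \<and> f ((g ^^ k) v) \<noteq> g ((g ^^ k) v)" for k
        by (induction k) (use parent_edges_eq_disagree_step[OF f g eq] v ne in auto)
      moreover obtain k where "(g ^^ k) v = r"
        using parent_map_reaches_root[OF g v] by blast
      ultimately show False
        using parent_map_root[OF f] parent_map_root[OF g] by metis
    qed
  qed
qed

lemma descent_potential_exists:
  assumes T: "simple_graph V T" "connected_by V T" and r: "r \<in> V"
  obtains d :: "'a \<Rightarrow> nat" where "\<And>v. v \<in> V \<Longrightarrow> v \<noteq> r \<Longrightarrow> \<exists>u\<in>V. {v, u} \<in> T \<and> d u < d v"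
proof -
  let ?R = "{(x, y). {x, y} \<in> T}"
  define dist where "dist v = (LEAST k. (v, r) \<in> ?R ^^ k)" for v
  have dist: "(v, r) \<in> ?R ^^ dist v" if v: "v \<in> V" for v
  proof -
    have "(v, r) \<in> ?R\<^sup>*"
      using T(2) v r unfolding connected_by_def by blast
    then obtain k where "(v, r) \<in> ?R ^^ k"
      using rtrancl_power by blast
    then show ?thesis
      unfolding dist_def by (rule LeastI)
  qed
  have "\<exists>u\<in>V. {v, u} \<in> T \<and> dist u < dist v" if v: "v \<in> V" "v \<noteq> r" for v
  proof -
    obtain k where k: "dist v = Suc k"
      using dist[OF v(1)] v(2) by (cases "dist v") auto
    with dist[OF v(1)] obtain u where u: "{v, u} \<in> T" "(u, r) \<in> ?R ^^ k"
      using relpow_Suc_D2 by fastforce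
    have "dist u \<le> k"
      unfolding dist_def using u(2) by (rule Least_le)
    moreover obtain a b where "{v, u} = {a, b}" "a \<in> V" "b \<in> V"
      using T(1) u(1) by (rule simple_graphE)
    ultimately show ?thesis
      using u(1) k by (auto simp: doubleton_eq_iff)
  qed
  then show thesis by (rule that)
qed

lemma parent_map_exists:
  assumes "simple_graph V T" "connected_by V T" "r \<in> V"
  obtains f where "f \<in> parent_maps V T r"
proof -
  obtain d :: "'a \<Rightarrow> nat" where closer: "\<And>v. v \<in> V \<Longrightarrow> v \<noteq> r \<Longrightarrow> \<exists>u\<in>V. {v, u} \<in> T \<and> d u < d v"
    using descent_potential_exists[OF assms] by blast
  define f where "f v = (if v \<in> V \<and> v \<noteq> r then SOME u. u \<in> V \<and> {v, u} \<in> T \<and> d u < d v else v)" for v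
  have f_closer: "f v \<in> V \<and> {v, f v} \<in> T \<and> d (f v) < d v" if v: "v \<in> V" "v \<noteq> r" for v
    using someI_ex[OF closer[OF v, unfolded Bex_def]] v unfolding f_def by simp
  have "\<exists>k. (f ^^ k) v = r" if v: "v \<in> V" for v
    using v
  proof (induction "d v" arbitrary: v rule: less_induct)
    case less
    show ?case
    proof (cases "v = r")
      case True
      then show ?thesis by (auto intro: exI[of _ 0])
    next
      case False
      then obtain k where "(f ^^ k) (f v) = r"
        using less f_closer by blast
      then have "(f ^^ Suc k) v = r"
        by (simp add: funpow_swap1)
      then show ?thesis by blast
    qed
  qed
  then have "f \<in> parent_maps V T r"
    unfolding parent_maps_def using f_closer by (auto simp: f_def)
  then show thesis by (rule that)
qed

lemma connected_subset_acyclic_eq: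
  assumes T: "simple_graph V T" "acyclic_edges T" and F: "F \<subseteq> T" "connected_by V F"
  shows "F = T"
proof (rule ccontr)
  assume "F \<noteq> T"
  with F(1) obtain e where e: "e \<in> T" "e \<notin> F" by blast
  with T(1) obtain a b where ab: "e = {a, b}" "a \<in> V" "b \<in> V" "a \<noteq> b"
    by (auto elim: simple_graphE)
  have "F \<subseteq> T - {{a, b}}"
    using F(1) e ab(1) by blast
  moreover have "(a, b) \<in> {(x, y). {x, y} \<in> F}\<^sup>*"
    using F(2) ab unfolding connected_by_def by blast
  ultimately have "(a, b) \<in> {(x, y). {x, y} \<in> T - {{a, b}}}\<^sup>*"
    by (rule edge_rel_rtrancl_mono)
  with T(2) e ab show False
    unfolding acyclic_edges_def by blast
qed

lemma bij_betw_parent_edges: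
  assumes "simple_graph V E" "r \<in> V"
  shows "bij_betw (parent_edges V r) (parent_maps V E r) {T. spanning_tree V E T}"
proof (rule bij_betw_imageI)
  show "inj_on (parent_edges V r) (parent_maps V E r)"
    by (rule inj_on_parent_edges)
  show "parent_edges V r ` parent_maps V E r = {T. spanning_tree V E T}"
  proof (intro equalityI subsetI)
    fix T assume "T \<in> {T. spanning_tree V E T}"
    then have T: "T \<subseteq> E" "connected_by V T" "acyclic_edges T"
      unfolding spanning_tree_def by auto
    have sT: "simple_graph V T"
      using assms(1) T(1) by (rule simple_graph_subset)
    then obtain f where f: "f \<in> parent_maps V T r"
      using T(2) assms(2) by (rule parent_map_exists)
    have "parent_edges V r f = T"
      using sT T(3) parent_edges_subset[OF f] connected_parent_edges[OF sT f assms(2)]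
      by (rule connected_subset_acyclic_eq)
    moreover have "f \<in> parent_maps V E r"
      using f parent_maps_mono[OF T(1)] by blast
    ultimately show "T \<in> parent_edges V r ` parent_maps V E r" by blast
  qed (use spanning_tree_parent_edges[OF assms(1) _ assms(2)] in blast)
qed

theorem num_spanning_trees_eq_card_parent_maps:
  assumes "simple_graph V E" "r \<in> V"
  shows "num_spanning_trees V E = card (parent_maps V E r)"
  unfolding num_spanning_trees_def
  using bij_betw_same_card[OF bij_betw_parent_edges[OF assms]] by simp

section \<open>Invariance under relabelling\<close>

lemma edge_rel_rtrancl_image:
  assumes "(u, v) \<in> {(x, y). {x, y} \<in> T}\<^sup>*"
  shows "(h u, h v) \<in> {(x, y). {x, y} \<in> (`) h ` T}\<^sup>*"
  using assms
proof (induction rule: rtrancl_induct)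
  case (step y z)
  then have "(h y, h z) \<in> {(x, y). {x, y} \<in> (`) h ` T}"
    by (auto intro: image_eqI[of _ _ "{y, z}"])
  with step.IH show ?case
    by (rule rtrancl_into_rtrancl)
qed simp

lemma edge_set_image_cancel:
  assumes "\<And>x. x \<in> \<Union>S \<Longrightarrow> g (h x) = x"
  shows "(`) g ` (`) h ` S = S"
proof -
  have "g ` h ` e = e" if "e \<in> S" for e
    using assms that by (force simp: image_image)
  then show ?thesis
    by (simp add: image_image)
qed

lemma connected_by_image:
  assumes "connected_by V T"
  shows "connected_by (h ` V) ((`) h ` T)"
  unfolding connected_by_def
proof (intro ballI)
  fix u' v' assume "u' \<in> h ` V" "v' \<in> h ` V"
  then obtain u v where "u \<in> V" "v \<in> V" "u' = h u" "v' = h v" by blast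
  moreover have "(u, v) \<in> {(x, y). {x, y} \<in> T}\<^sup>*"
    using assms \<open>u \<in> V\<close> \<open>v \<in> V\<close> unfolding connected_by_def by blast
  ultimately show "(u', v') \<in> {(x, y). {x, y} \<in> (`) h ` T}\<^sup>*"
    using edge_rel_rtrancl_image[of u v T h] by simp
qed

text \<open>A path avoiding \<open>h ` e\<close> is mapped back by the inverse of \<open>h\<close> to a path avoiding \<open>e\<close>.\<close>
lemma acyclic_edges_image:
  assumes inj: "inj_on h (\<Union>T)" and acyc: "acyclic_edges T"
  shows "acyclic_edges ((`) h ` T)"
  unfolding acyclic_edges_def
proof (intro allI impI, elim conjE)
  fix x' y' assume e': "{x', y'} \<in> (`) h ` T" "x' \<noteq> y'"
  then obtain e where e: "e \<in> T" "h ` e = {x', y'}" by auto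
  let ?g = "inv_into (\<Union>T) h"
  have cancel: "(`) ?g ` (`) h ` S = S" if "S \<subseteq> T" for S
    using that by (intro edge_set_image_cancel inv_into_f_f[OF inj]) blast
  have "e = ?g ` h ` e"
    using cancel[of "{e}"] e(1) by simp
  then have exy: "e = {?g x', ?g y'}"
    using e(2) by simp
  moreover have "?g x' \<noteq> ?g y'"
    using exy e(2) e'(2) by auto
  ultimately have not_conn: "(?g x', ?g y') \<notin> {(a, b). {a, b} \<in> T - {e}}\<^sup>*"
    using acyc e(1) unfolding acyclic_edges_def by blast
  show "(x', y') \<notin> {(a, b). {a, b} \<in> (`) h ` T - {{x', y'}}}\<^sup>*"
  proof
    assume "(x', y') \<in> {(a, b). {a, b} \<in> (`) h ` T - {{x', y'}}}\<^sup>*"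
    moreover have "(`) h ` T - {h ` e} \<subseteq> (`) h ` (T - {e})"
      by blast
    ultimately have "(x', y') \<in> {(a, b). {a, b} \<in> (`) h ` (T - {e})}\<^sup>*"
      unfolding e(2) by (rule edge_rel_rtrancl_mono[rotated])
    then have "(?g x', ?g y') \<in> {(a, b). {a, b} \<in> (`) ?g ` (`) h ` (T - {e})}\<^sup>*"
      by (rule edge_rel_rtrancl_image)
    with not_conn show False
      using cancel[of "T - {e}"] by auto
  qed
qed

lemma spanning_tree_image:
  assumes "inj_on h V" "\<forall>e\<in>E. e \<subseteq> V" "spanning_tree V E T"
  shows "spanning_tree (h ` V) ((`) h ` E) ((`) h ` T)"
proof -
  have T: "T \<subseteq> E" "connected_by V T" "acyclic_edges T"
    using assms(3) unfolding spanning_tree_def by auto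
  have "\<Union>T \<subseteq> V"
    using assms(2) T(1) by auto
  with assms(1) have "inj_on h (\<Union>T)"
    by (rule inj_on_subset)
  then show ?thesis
    unfolding spanning_tree_def
    by (intro conjI image_mono[OF T(1)] connected_by_image[OF T(2)] acyclic_edges_image[OF _ T(3)])
qed

lemma num_spanning_trees_image:
  assumes inj: "inj_on h V" and EV: "\<forall>e\<in>E. e \<subseteq> V"
  shows "num_spanning_trees (h ` V) ((`) h ` E) = num_spanning_trees V E"
proof -
  let ?g = "inv_into V h"
  let ?hE = "(`) h ` E"
  have cancel: "(`) ?g ` (`) h ` S = S" if "S \<subseteq> E" for S
    using that EV by (intro edge_set_image_cancel inv_into_f_f[OF inj]) blast
  have gV: "?g ` h ` V = V"
    using inj by simp
  have hE: "\<forall>e\<in>?hE. e \<subseteq> h ` V"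
    using EV by blast
  have "inj_on ((`) ((`) h)) {T. spanning_tree V E T}"
    by (rule inj_on_inverseI[where g = "(`) ((`) ?g)"]) (use cancel in \<open>auto simp: spanning_tree_def\<close>)
  moreover have "(`) ((`) h) ` {T. spanning_tree V E T} = {T. spanning_tree (h ` V) ?hE T}"
  proof (intro equalityI subsetI)
    fix T' assume "T' \<in> {T. spanning_tree (h ` V) ?hE T}"
    then have T': "spanning_tree (h ` V) ?hE T'" by simp
    have "spanning_tree (?g ` h ` V) ((`) ?g ` ?hE) ((`) ?g ` T')"
      using inj_on_inv_into[of "h ` V"] hE T' by (intro spanning_tree_image) auto
    then have "spanning_tree V E ((`) ?g ` T')"
      using gV cancel[of E] by simp
    moreover have "T' = (`) h ` (`) ?g ` T'"
      using T' hE unfolding spanning_tree_def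
      by (intro edge_set_image_cancel[symmetric] f_inv_into_f) blast
    ultimately show "T' \<in> (`) ((`) h) ` {T. spanning_tree V E T}" by blast
  qed (use spanning_tree_image[OF inj EV] in blast)
  ultimately show ?thesis
    unfolding num_spanning_trees_def by (metis card_image)
qed

section \<open>The matrix forest theorem\<close>

definition reaches_fixpoint :: "('a \<Rightarrow> 'a) \<Rightarrow> 'a \<Rightarrow> bool" where
  "reaches_fixpoint f v \<longleftrightarrow> (\<exists>k. f ((f ^^ k) v) = (f ^^ k) v)"

lemma reaches_fixpoint_step:
  assumes "f v \<noteq> v"
  shows "reaches_fixpoint f (f v) \<longleftrightarrow> reaches_fixpoint f v"
  unfolding reaches_fixpoint_def using ex_funpow_step_iff[of "\<lambda>w. f w = w" v f] assms by simp

lemma not_reaches_fixpoint_if_closed: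
  assumes closed: "\<And>i. i \<in> S \<Longrightarrow> f i \<in> S \<and> f i \<noteq> i" and v: "v \<in> S"
  shows "\<not> reaches_fixpoint f v"
proof -
  have "(f ^^ k) v \<in> S" for k
    by (induction k) (use v closed in auto)
  then show ?thesis
    unfolding reaches_fixpoint_def using closed by blast
qed

text \<open>Rooted spanning forests of the digraph \<open>adj\<close> on \<open>{0..<n}\<close>, encoded by parent maps
  whose fixed points are the roots.\<close>
definition rooted_forest_maps :: "nat \<Rightarrow> (nat \<Rightarrow> nat \<Rightarrow> bool) \<Rightarrow> (nat \<Rightarrow> nat) set" where
  "rooted_forest_maps n adj = {f. (\<forall>v. n \<le> v \<longrightarrow> f v = v)
     \<and> (\<forall>v<n. f v < n \<and> (f v = v \<or> adj v (f v))) \<and> (\<forall>v<n. reaches_fixpoint f v)}"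

lemma finite_rooted_forest_maps: "finite (rooted_forest_maps n adj)"
proof (rule finite_subset)
  show "rooted_forest_maps n adj \<subseteq> {f. (\<forall>i\<in>{0..<n}. f i \<in> {0..<n}) \<and> (\<forall>i. i \<notin> {0..<n} \<longrightarrow> f i = i)}"
    unfolding rooted_forest_maps_def by auto
qed (rule finite_bounded_functions; simp)

definition shifted_laplacian :: "nat \<Rightarrow> (nat \<Rightarrow> nat \<Rightarrow> bool) \<Rightarrow> 'a::comm_ring_1 \<Rightarrow> 'a mat" where
  "shifted_laplacian n adj x = mat n n (\<lambda>(i, j).
     if i = j then x + of_nat (card {u. u < n \<and> u \<noteq> i \<and> adj i u}) else if adj i j then -1 else 0)"

text \<open>Row \<open>i\<close> of \<open>shifted_laplacian\<close> is the sum over \<open>u\<close> of \<open>choice_row n adj x i u\<close>, so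
  multilinearity expands its determinant into one term \<open>det (choice_mat n adj x f)\<close> per map \<open>f\<close>.\<close>
definition choice_row :: "nat \<Rightarrow> (nat \<Rightarrow> nat \<Rightarrow> bool) \<Rightarrow> 'a::comm_ring_1 \<Rightarrow> nat \<Rightarrow> nat \<Rightarrow> 'a vec" where
  "choice_row n adj x i u = vec n (\<lambda>j.
     if u = i then (if j = i then x else 0)
     else if adj i u then (if j = i then 1 else if j = u then -1 else 0) else 0)"

definition choice_mat :: "nat \<Rightarrow> (nat \<Rightarrow> nat \<Rightarrow> bool) \<Rightarrow> 'a::comm_ring_1 \<Rightarrow> (nat \<Rightarrow> nat) \<Rightarrow> 'a mat" where
  "choice_mat n adj x f = mat\<^sub>r n n (\<lambda>i. choice_row n adj x i (f i))"

lemma dim_choice_mat [simp]: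
  "dim_row (choice_mat n adj x f) = n" "dim_col (choice_mat n adj x f) = n"
  unfolding choice_mat_def by simp_all

lemma choice_mat_carrier: "choice_mat n adj x f \<in> carrier_mat n n"
  by (simp add: carrier_matI)

lemma choice_mat_entry:
  assumes "i < n" "j < n" "f i = i \<or> adj i (f i)"
  shows "choice_mat n adj x f $$ (i, j) =
    (if f i = i then (if j = i then x else 0) else if j = i then 1 else if j = f i then -1 else 0)"
  using assms by (auto simp: choice_mat_def choice_row_def)

lemma det_choice_mat_non_edge:
  assumes "c < n" "f c \<noteq> c" "\<not> adj c (f c)"
  shows "det (choice_mat n adj x f) = 0"
proof -
  have "choice_row n adj x c (f c) = 0\<^sub>v n"
    using assms unfolding choice_row_def by (intro eq_vecI) auto
  then have "choice_mat n adj x f = mat\<^sub>r n n (\<lambda>i. if i = c then 0\<^sub>v n else choice_row n adj x i (f i))"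
    unfolding choice_mat_def by (intro eq_matI) auto
  also have "det \<dots> = 0"
    by (rule det_row_0) (auto simp: assms choice_row_def)
  finally show ?thesis .
qed

text \<open>The vertices moved by \<open>p\<close> form an \<open>f\<close>-invariant set without fixed points of \<open>f\<close>, which
  must be empty when every vertex reaches a root.\<close>
lemma forest_permutation_trivial:
  assumes p: "p permutes {0..<n}"
    and p_choice: "\<And>i. i < n \<Longrightarrow> p i = i \<or> (f i \<noteq> i \<and> p i = f i)"
    and forest: "\<And>v. v < n \<Longrightarrow> reaches_fixpoint f v"
  shows "p = id"
proof (rule ccontr)
  let ?S = "{i. p i \<noteq> i}"
  have S_lt: "i < n" if "i \<in> ?S" for i
    using that permutes_not_in[OF p] by fastforce
  have closed: "f i \<in> ?S \<and> f i \<noteq> i" if "i \<in> ?S" for i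
  proof -
    have pi: "p i = f i" "f i \<noteq> i"
      using that p_choice[OF S_lt[OF that]] by auto
    have "p (f i) \<noteq> f i"
    proof
      assume "p (f i) = f i"
      then have "p (f i) = p i" using pi by simp
      with permutes_inj[OF p] have "f i = i"
        by (rule injD)
      with pi show False by simp
    qed
    with pi show ?thesis by simp
  qed
  assume "p \<noteq> id"
  then obtain i where "i \<in> ?S" by (auto simp: fun_eq_iff)
  then show False
    using not_reaches_fixpoint_if_closed[of ?S f, OF closed] forest[OF S_lt] by blast
qed

lemma det_choice_mat_forest:
  assumes f_adj: "\<And>i. i < n \<Longrightarrow> f i = i \<or> adj i (f i)"
    and forest: "\<And>v. v < n \<Longrightarrow> reaches_fixpoint f v"
  shows "det (choice_mat n adj x f) = x ^ card {v. v < n \<and> f v = v}"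
proof -
  let ?B = "choice_mat n adj x f"
  let ?term = "\<lambda>p. signof p * (\<Prod>i = 0..<n. ?B $$ (i, p i))"
  have vanish: "(\<Prod>i = 0..<n. ?B $$ (i, p i)) = 0" if p: "p permutes {0..<n}" "p \<noteq> id" for p
  proof (rule ccontr)
    assume nonzero: "(\<Prod>i = 0..<n. ?B $$ (i, p i)) \<noteq> 0"
    have "?B $$ (i, p i) \<noteq> 0" if "i < n" for i
    proof
      assume "?B $$ (i, p i) = 0"
      with that have "(\<Prod>i = 0..<n. ?B $$ (i, p i)) = 0"
        by (intro prod_zero) auto
      with nonzero show False ..
    qed
    moreover have "p i < n" if "i < n" for i
      using permutes_in_image[OF p(1)] that by simp
    ultimately have "p i = i \<or> (f i \<noteq> i \<and> p i = f i)" if "i < n" for i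
      using that choice_mat_entry[of i n "p i" f adj x] f_adj[OF that] by (fastforce split: if_splits)
    with p forest show False
      using forest_permutation_trivial by blast
  qed
  have "det ?B = (\<Sum>p\<in>{p. p permutes {0..<n}}. ?term p)"
    by (rule det_def'[OF choice_mat_carrier])
  also have "\<dots> = ?term id + (\<Sum>p\<in>{p. p permutes {0..<n}} - {id}. ?term p)"
    by (rule sum.remove) (auto simp: finite_permutations)
  also have "(\<Sum>p\<in>{p. p permutes {0..<n}} - {id}. ?term p) = 0"
    using vanish by (intro sum.neutral) auto
  also have "(\<Prod>i = 0..<n. ?B $$ (i, id i)) = (\<Prod>i = 0..<n. if f i = i then x else 1)"
    by (intro prod.cong) (auto simp: choice_mat_entry f_adj)
  also have "\<dots> = (\<Prod>i\<in>{i \<in> {0..<n}. f i = i}. x)"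
    by (rule prod.inter_filter[symmetric]) simp
  also have "{i \<in> {0..<n}. f i = i} = {v. v < n \<and> f v = v}"
    by auto
  finally show ?thesis by simp
qed

text \<open>The indicator of the vertices that never reach a root is constant along the edges of \<open>f\<close>.\<close>
lemma choice_mat_mult_unreached_indicator:
  fixes x :: "'a::comm_ring_1"
  assumes f_lt: "\<And>i. i < n \<Longrightarrow> f i < n" and f_adj: "\<And>i. i < n \<Longrightarrow> f i = i \<or> adj i (f i)"
  shows "choice_mat n adj x f *\<^sub>v vec n (\<lambda>i. if reaches_fixpoint f i then 0 else 1) = 0\<^sub>v n"
    (is "?B *\<^sub>v ?z = _")
proof (rule eq_vecI)
  define z where "z = ?z"
  fix i assume "i < dim_vec (0\<^sub>v n :: 'a vec)"
  then have i: "i < n" by simp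
  have entry: "?B $$ (i, j) =
    (if f i = i then (if j = i then x else 0) else if j = i then 1 else if j = f i then -1 else 0)"
    if "j < n" for j
    using choice_mat_entry[of i n j f adj x] i that f_adj[OF i] by blast
  have "(?B *\<^sub>v z) $ i = (\<Sum>j = 0..<n. ?B $$ (i, j) * z $ j)"
    using i by (auto simp: scalar_prod_def z_def intro!: sum.cong)
  also have "\<dots> = 0"
  proof (cases "f i = i")
    case True
    then have "z $ i = 0"
      using i unfolding z_def reaches_fixpoint_def by (auto intro: exI[of _ 0])
    with i True show ?thesis
      by (simp add: entry if_distrib[of "\<lambda>c. c * _"] cong: if_cong)
  next
    case False
    have "z $ f i = z $ i"
      using i f_lt[OF i] reaches_fixpoint_step[of f i, OF False] unfolding z_def by simp
    have "(\<Sum>j = 0..<n. ?B $$ (i, j) * z $ j)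
        = (\<Sum>j = 0..<n. (if j = i then z $ i else 0) + (if j = f i then - z $ f i else 0))"
      using False by (intro sum.cong) (auto simp: entry)
    also have "\<dots> = z $ i - z $ f i"
      using i f_lt[OF i] by (simp add: sum.distrib)
    finally show ?thesis
      using \<open>z $ f i = z $ i\<close> by simp
  qed
  finally show "(?B *\<^sub>v ?z) $ i = 0\<^sub>v n $ i" using i by (simp add: z_def)
qed simp

lemma det_choice_mat_cycle:
  fixes x :: "'a::idom"
  assumes f_lt: "\<And>i. i < n \<Longrightarrow> f i < n" and f_adj: "\<And>i. i < n \<Longrightarrow> f i = i \<or> adj i (f i)"
    and w: "w < n" "\<not> reaches_fixpoint f w"
  shows "det (choice_mat n adj x f) = 0"
proof -
  let ?z = "vec n (\<lambda>i. if reaches_fixpoint f i then 0 else 1 :: 'a)"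
  have "?z \<noteq> 0\<^sub>v n"
  proof
    assume "?z = 0\<^sub>v n"
    then have "?z $ w = 0" using w by simp
    with w show False by simp
  qed
  moreover have "choice_mat n adj x f *\<^sub>v ?z = 0\<^sub>v n"
    using f_lt f_adj by (rule choice_mat_mult_unreached_indicator)
  moreover have "?z \<in> carrier_vec n"
    by simp
  ultimately show ?thesis
    unfolding det_0_iff_vec_prod_zero[OF choice_mat_carrier] by blast
qed

lemma choice_row_sum:
  assumes i: "i < n" and j: "j < n"
  shows "(\<Sum>u = 0..<n. choice_row n adj x i u $ j) = shifted_laplacian n adj x $$ (i, j)"
proof -
  let ?N = "{u. u < n \<and> u \<noteq> i \<and> adj i u}"
  have "(\<Sum>u = 0..<n. choice_row n adj x i u $ j)
      = (\<Sum>u = 0..<n. (if u = i \<and> j = i then x else 0)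
          + (if u \<in> ?N then (if j = i then 1 else 0) - (if j = u then 1 else 0) else 0))"
    using j by (intro sum.cong) (auto simp: choice_row_def)
  also have "\<dots> = (if j = i then x else 0) + (\<Sum>u\<in>?N. (if j = i then 1 else 0) - (if j = u then 1 else 0))"
  proof -
    have "{..<n} \<inter> {u. u \<noteq> i \<and> adj i u} = ?N" by auto
    with i show ?thesis by (simp add: sum.distrib sum.If_cases atLeast0LessThan)
  qed
  also have "\<dots> = shifted_laplacian n adj x $$ (i, j)"
    using i j by (auto simp: shifted_laplacian_def sum_subtractf)
  finally show ?thesis .
qed

lemma shifted_laplacian_eq_choice_row_sums:
  "shifted_laplacian n adj x = mat\<^sub>r n n (\<lambda>i. finsum_vec TYPE('a::comm_ring_1) n (choice_row n adj x i) {0..<n})"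
proof (rule eq_matI)
  fix i j assume "i < dim_row (mat\<^sub>r n n (\<lambda>i. finsum_vec TYPE('a) n (choice_row n adj x i) {0..<n}))"
    "j < dim_col (mat\<^sub>r n n (\<lambda>i. finsum_vec TYPE('a) n (choice_row n adj x i) {0..<n}))"
  then have i: "i < n" and j: "j < n" by simp_all
  have "finsum_vec TYPE('a) n (choice_row n adj x i) {0..<n} $ j = (\<Sum>u = 0..<n. choice_row n adj x i u $ j)"
    using j by (intro index_finsum_vec) (auto simp: choice_row_def)
  with i j show "shifted_laplacian n adj x $$ (i, j) =
      mat\<^sub>r n n (\<lambda>i. finsum_vec TYPE('a) n (choice_row n adj x i) {0..<n}) $$ (i, j)"
    by (simp add: choice_row_sum)
qed (simp_all add: shifted_laplacian_def)

lemma det_choice_mat: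
  fixes x :: "'a::idom"
  assumes f_lt: "\<And>i. i < n \<Longrightarrow> f i < n" and f_out: "\<And>i. n \<le> i \<Longrightarrow> f i = i"
  shows "det (choice_mat n adj x f) =
    (if f \<in> rooted_forest_maps n adj then x ^ card {v. v < n \<and> f v = v} else 0)"
proof (cases "f \<in> rooted_forest_maps n adj")
  case True
  then show ?thesis
    by (simp add: det_choice_mat_forest rooted_forest_maps_def)
next
  case not_forest: False
  show ?thesis
  proof (cases "\<forall>i<n. f i = i \<or> adj i (f i)")
    case True
    with not_forest f_lt f_out obtain w where "w < n" "\<not> reaches_fixpoint f w"
      unfolding rooted_forest_maps_def by auto
    then have "det (choice_mat n adj x f) = 0"
      using True by (intro det_choice_mat_cycle[OF f_lt]) auto
    with not_forest show ?thesis by simp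
  next
    case False
    then obtain c where "c < n" "f c \<noteq> c" "\<not> adj c (f c)" by auto
    then have "det (choice_mat n adj x f) = 0"
      by (rule det_choice_mat_non_edge)
    with not_forest show ?thesis by simp
  qed
qed

theorem matrix_forest_theorem:
  fixes x :: "'a::idom"
  shows "det (shifted_laplacian n adj x) = (\<Sum>f\<in>rooted_forest_maps n adj. x ^ card {v. v < n \<and> f v = v})"
proof -
  let ?F = "{f. (\<forall>i\<in>{0..<n}. f i \<in> {0..<n}) \<and> (\<forall>i. i \<notin> {0..<n} \<longrightarrow> f i = i)}"
  have "det (shifted_laplacian n adj x) = (\<Sum>f\<in>?F. det (choice_mat n adj x f))"
    unfolding shifted_laplacian_eq_choice_row_sums choice_mat_def
    by (rule det_linear_rows_sum) (auto simp: choice_row_def)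
  also have "\<dots> = (\<Sum>f\<in>?F. if f \<in> rooted_forest_maps n adj then x ^ card {v. v < n \<and> f v = v} else 0)"
    by (intro sum.cong refl det_choice_mat) auto
  also have "\<dots> = (\<Sum>f\<in>?F \<inter> rooted_forest_maps n adj. x ^ card {v. v < n \<and> f v = v})"
    by (rule sum.inter_restrict[symmetric]) (rule finite_bounded_functions; simp)
  also have "?F \<inter> rooted_forest_maps n adj = rooted_forest_maps n adj"
    unfolding rooted_forest_maps_def by auto
  finally show ?thesis .
qed

section \<open>Spanning trees from the matrix forest theorem\<close>

definition graph_edges :: "'a set \<Rightarrow> ('a \<Rightarrow> 'a \<Rightarrow> bool) \<Rightarrow> 'a set set" where
  "graph_edges V adj = {{u, v} | u v. u \<in> V \<and> v \<in> V \<and> u \<noteq> v \<and> adj u v}"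

lemma graph_edgesI:
  "u \<in> V \<Longrightarrow> v \<in> V \<Longrightarrow> u \<noteq> v \<Longrightarrow> adj u v \<Longrightarrow> {u, v} \<in> graph_edges V adj"
  unfolding graph_edges_def by blast

lemma simple_graph_graph_edges: "simple_graph V (graph_edges V adj)"
  unfolding simple_graph_def graph_edges_def by blast

lemma doubleton_mem_graph_edges:
  assumes "symp adj"
  shows "{v, w} \<in> graph_edges V adj \<longleftrightarrow> v \<in> V \<and> w \<in> V \<and> v \<noteq> w \<and> adj v w"
  unfolding graph_edges_def by (auto simp: doubleton_eq_iff dest: sympD[OF assms])

lemma rooted_forest_if_parent_map:
  assumes adj: "symp adj" and r: "r < n"
    and f: "f \<in> parent_maps {0..<n} (graph_edges {0..<n} adj) r"
  shows "f \<in> rooted_forest_maps n adj" "{v. v < n \<and> f v = v} = {r}"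
proof -
  have f_adj: "f v < n \<and> (f v = v \<or> adj v (f v))" if "v < n" for v
    using parent_map_root[OF f] parent_map_edge[OF f, of v] that r
    by (cases "v = r") (auto simp: doubleton_mem_graph_edges[OF adj])
  have forest: "reaches_fixpoint f v" if v: "v < n" for v
  proof -
    obtain k where "(f ^^ k) v = r"
      using parent_map_reaches_root[OF f, of v] v by auto
    with parent_map_root[OF f] show ?thesis
      unfolding reaches_fixpoint_def by metis
  qed
  have "\<forall>v. n \<le> v \<longrightarrow> f v = v"
    using parent_map_outside[OF f] by simp
  then show "f \<in> rooted_forest_maps n adj"
    unfolding rooted_forest_maps_def using f_adj forest by blast
  have root_unique: "v = r" if v: "v < n" "f v = v" for v
  proof -
    obtain k where "(f ^^ k) v = r"
      using parent_map_reaches_root[OF f, of v] v(1) by auto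
    with funpow_fixpoint[of f v k] v(2) show ?thesis by simp
  qed
  then show "{v. v < n \<and> f v = v} = {r}"
    using parent_map_root[OF f] r by blast
qed

lemma parent_map_if_rooted_forest:
  assumes adj: "symp adj"
    and f: "f \<in> rooted_forest_maps n adj" and roots: "{v. v < n \<and> f v = v} = {r}"
  shows "f \<in> parent_maps {0..<n} (graph_edges {0..<n} adj) r"
proof -
  have f_adj: "\<And>v. v < n \<Longrightarrow> f v < n \<and> (f v = v \<or> adj v (f v))"
    and f_out: "\<And>v. n \<le> v \<Longrightarrow> f v = v"
    and forest: "\<And>v. v < n \<Longrightarrow> reaches_fixpoint f v"
    using f unfolding rooted_forest_maps_def by auto
  have iter_lt: "(f ^^ k) v < n" if "v < n" for v k
    by (induction k) (use that f_adj in auto)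
  have reach: "\<exists>k. (f ^^ k) v = r" if v: "v < n" for v
  proof -
    obtain k where "f ((f ^^ k) v) = (f ^^ k) v"
      using forest[OF v] unfolding reaches_fixpoint_def by blast
    with iter_lt[OF v] have "(f ^^ k) v \<in> {v. v < n \<and> f v = v}" by simp
    with roots show ?thesis by blast
  qed
  have edge: "{v, f v} \<in> graph_edges {0..<n} adj" if v: "v < n" "v \<noteq> r" for v
  proof -
    have "f v \<noteq> v"
      using roots v by blast
    with f_adj[OF v(1)] v(1) show ?thesis
      by (simp add: doubleton_mem_graph_edges[OF adj])
  qed
  have "\<forall>v. v \<notin> {0..<n} \<longrightarrow> f v = v"
    using f_out by simp
  moreover have "f r = r"
    using roots by blast
  ultimately show ?thesis
    unfolding parent_maps_def using reach edge by simp
qed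

lemma parent_maps_graph_edges:
  assumes "symp adj" "r < n"
  shows "parent_maps {0..<n} (graph_edges {0..<n} adj) r
    = {f \<in> rooted_forest_maps n adj. {v. v < n \<and> f v = v} = {r}}"
  using rooted_forest_if_parent_map[OF assms] parent_map_if_rooted_forest[OF assms(1)] by blast

lemma card_single_root_forests:
  assumes adj: "symp adj"
  shows "card {f \<in> rooted_forest_maps n adj. card {v. v < n \<and> f v = v} = 1}
    = n * num_spanning_trees {0..<n} (graph_edges {0..<n} adj)"
proof -
  let ?S = "\<lambda>r. {f \<in> rooted_forest_maps n adj. {v. v < n \<and> f v = v} = {r}}"
  have "{f \<in> rooted_forest_maps n adj. card {v. v < n \<and> f v = v} = 1} = (\<Union>r\<in>{0..<n}. ?S r)"
    by (auto simp: card_1_singleton_iff)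
  moreover have "card (\<Union>r\<in>{0..<n}. ?S r) = (\<Sum>r = 0..<n. card (?S r))"
    by (rule card_UN_disjoint) (auto intro: finite_subset[OF _ finite_rooted_forest_maps])
  moreover have "card (?S r) = num_spanning_trees {0..<n} (graph_edges {0..<n} adj)" if "r < n" for r
    using num_spanning_trees_eq_card_parent_maps[OF simple_graph_graph_edges, of r "{0..<n}" adj]
      parent_maps_graph_edges[OF adj that] that
    by simp
  ultimately show ?thesis by simp
qed

theorem coeff_det_shifted_laplacian:
  assumes "symp adj"
  shows "coeff (det (shifted_laplacian n adj (monom 1 1))) 1
    = int (n * num_spanning_trees {0..<n} (graph_edges {0..<n} adj))"
proof -
  let ?c = "\<lambda>f. card {v. v < n \<and> f v = v}"
  have "coeff (det (shifted_laplacian n adj (monom 1 1))) 1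
      = (\<Sum>f\<in>rooted_forest_maps n adj. coeff (monom (1::int) 1 ^ ?c f) 1)"
    by (simp add: matrix_forest_theorem coeff_sum)
  also have "\<dots> = (\<Sum>f\<in>rooted_forest_maps n adj. if ?c f = 1 then 1 else 0)"
    by (intro sum.cong) (auto simp: monom_power)
  also have "\<dots> = int (card {f \<in> rooted_forest_maps n adj. ?c f = 1})"
    by (simp add: sum.inter_filter[symmetric] finite_rooted_forest_maps)
  finally show ?thesis
    using card_single_root_forests[OF assms] by simp
qed

section \<open>Complete multipartite graphs\<close>

definition block_size :: "nat \<Rightarrow> (nat \<Rightarrow> nat) \<Rightarrow> nat \<Rightarrow> nat" where
  "block_size N blk b = card {u. u < N \<and> blk u = b}"

lemma card_outside_block: "card {u. u < N \<and> blk u \<noteq> b} = N - block_size N blk b"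
proof -
  have "{u. u < N \<and> blk u \<noteq> b} = {0..<N} - {u. u < N \<and> blk u = b}"
    by auto
  moreover have "{u. u < N \<and> blk u = b} \<subseteq> {0..<N}"
    by auto
  ultimately show ?thesis
    unfolding block_size_def by (simp add: card_Diff_subset)
qed

lemma dim_shifted_laplacian [simp]:
  "dim_row (shifted_laplacian n adj x) = n" "dim_col (shifted_laplacian n adj x) = n"
  unfolding shifted_laplacian_def by simp_all

lemma multipartite_laplacian_entry:
  assumes "i < N" "j < N"
  shows "shifted_laplacian N (\<lambda>i j. blk i \<noteq> blk j) x $$ (i, j) =
    (if i = j then x + of_nat (N - block_size N blk (blk i)) else if blk i = blk j then 0 else -1)"
proof -
  have "card {u. u < N \<and> u \<noteq> i' \<and> blk i' \<noteq> blk u} = N - block_size N blk (blk i')" for i'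
  proof -
    have "{u. u < N \<and> u \<noteq> i' \<and> blk i' \<noteq> blk u} = {u. u < N \<and> blk u \<noteq> blk i'}"
      by auto
    then show ?thesis by (simp add: card_outside_block)
  qed
  with assms show ?thesis
    by (simp add: shifted_laplacian_def)
qed

lemma sum_multipartite_laplacian_subset:
  fixes x :: "'a::comm_ring_1"
  assumes z: "z < N" and A: "A \<subseteq> {0..<N}"
  shows "(\<Sum>w\<in>A. shifted_laplacian N (\<lambda>i j. blk i \<noteq> blk j) x $$ (z, w)) =
    (if z \<in> A then x + of_nat (N - block_size N blk (blk z)) else 0)
      - of_nat (card {w \<in> A. blk w \<noteq> blk z})"
proof -
  let ?d = "x + of_nat (N - block_size N blk (blk z))"
  have fin: "finite A"
    using A finite_subset by blast
  have "(\<Sum>w\<in>A. shifted_laplacian N (\<lambda>i j. blk i \<noteq> blk j) x $$ (z, w))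
      = (\<Sum>w\<in>A. (if w = z then ?d else 0) - (if blk w \<noteq> blk z then 1 else 0))"
    using A z by (intro sum.cong) (auto simp: multipartite_laplacian_entry)
  also have "\<dots> = (if z \<in> A then ?d else 0) - (\<Sum>w\<in>A. if blk w \<noteq> blk z then 1 else 0)"
    using fin by (simp add: sum_subtractf)
  also have "(\<Sum>w\<in>A. if blk w \<noteq> blk z then 1 else 0) = (\<Sum>w\<in>{w \<in> A. blk w \<noteq> blk z}. (1::'a))"
    using fin by (rule sum.inter_filter[symmetric])
  finally show ?thesis by simp
qed

lemma sum_multipartite_laplacian_row:
  fixes x :: "'a::comm_ring_1" and blk :: "nat \<Rightarrow> nat"
  assumes z: "z < N"
  shows "(\<Sum>w = 0..<N. shifted_laplacian N (\<lambda>i j. blk i \<noteq> blk j) x $$ (z, w)) = x"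
proof -
  have "{w \<in> {0..<N}. blk w \<noteq> blk z} = {u. u < N \<and> blk u \<noteq> blk z}"
    by auto
  with z show ?thesis
    using sum_multipartite_laplacian_subset[OF z, of "{0..<N}" blk x] by (simp add: card_outside_block)
qed

lemma sum_multipartite_laplacian_block:
  fixes x :: "'a::comm_ring_1"
  assumes z: "z < N"
  shows "(\<Sum>w | w < N \<and> blk w = c. shifted_laplacian N (\<lambda>i j. blk i \<noteq> blk j) x $$ (z, w))
    = (if blk z = c then x + of_nat (N - block_size N blk c) else - of_nat (block_size N blk c))"
proof -
  let ?B = "{w. w < N \<and> blk w = c}"
  have B: "?B \<subseteq> {0..<N}"
    by auto
  show ?thesis
  proof (cases "blk z = c")
    case True
    then have "{w \<in> ?B. blk w \<noteq> blk z} = {}"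
      by auto
    with True z show ?thesis
      using sum_multipartite_laplacian_subset[OF z B, of blk x] by simp
  next
    case False
    then have "{w \<in> ?B. blk w \<noteq> blk z} = {u. u < N \<and> blk u = c}"
      by auto
    with False show ?thesis
      using sum_multipartite_laplacian_subset[OF z B, of blk x] by (simp add: block_size_def)
  qed
qed

locale block_labelling =
  fixes N k :: nat and blk :: "nat \<Rightarrow> nat"
  assumes k_pos: "0 < k" and k_le_N: "k \<le> N"
    and blk_rep: "\<And>b. b < k \<Longrightarrow> blk b = b"
    and blk_lt: "\<And>i. i < N \<Longrightarrow> blk i < k"
begin

definition rep :: "nat \<Rightarrow> nat" where
  "rep i = (if i < k then 0 else blk i)"

lemma rep_lt: "0 < i \<Longrightarrow> i < N \<Longrightarrow> rep i < i"
  using blk_lt[of i] by (auto simp: rep_def)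

lemma rep_lt_N: "i < N \<Longrightarrow> rep i < N"
  using blk_lt[of i] k_le_N by (auto simp: rep_def)

lemma blk_rep_eq: "i < N \<Longrightarrow> blk (rep i) = (if i < k then 0 else blk i)"
  using blk_rep[OF k_pos] blk_rep[OF blk_lt] by (simp add: rep_def)

text \<open>Right multiplication by \<open>col_op\<close> replaces column \<open>0\<close> by the sum of all columns and
  column \<open>c < k\<close> by the sum of the columns in block \<open>c\<close>; left multiplication by \<open>row_op\<close>
  subtracts row \<open>rep i\<close> from every row \<open>i > 0\<close>.  Both are unitriangular because vertex \<open>b\<close>
  comes first in block \<open>b\<close>, and together they make the multipartite \<open>shifted_laplacian\<close>
  upper triangular.\<close>
definition col_op :: "'a::comm_ring_1 mat" where
  "col_op = mat N N (\<lambda>(w, c). if c = 0 then 1 else if c < k then (if blk w = c then 1 else 0)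
     else if w = c then 1 else 0)"

definition row_op :: "'a::comm_ring_1 mat" where
  "row_op = mat N N (\<lambda>(i, j). if i = j then 1 else if 0 < i \<and> j = rep i then -1 else 0)"

lemma dim_col_op [simp]:
  "dim_row (col_op :: 'a::comm_ring_1 mat) = N" "dim_col (col_op :: 'a mat) = N"
  unfolding col_op_def by simp_all

lemma dim_row_op [simp]:
  "dim_row (row_op :: 'a::comm_ring_1 mat) = N" "dim_col (row_op :: 'a mat) = N"
  unfolding row_op_def by simp_all

lemma col_op_carrier: "col_op \<in> carrier_mat N N"
  and row_op_carrier: "row_op \<in> carrier_mat N N"
  by (simp_all add: carrier_matI)

lemma det_col_op: "det (col_op :: 'a::comm_ring_1 mat) = 1"
proof -
  have "det (col_op :: 'a mat) = prod_list (diag_mat col_op)"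
    by (rule det_lower_triangular[OF _ col_op_carrier]) (auto simp: col_op_def blk_rep)
  also have "\<dots> = 1"
    unfolding prod_list_diag_prod by (intro prod.neutral) (auto simp: col_op_def blk_rep)
  finally show ?thesis .
qed

lemma det_row_op: "det (row_op :: 'a::comm_ring_1 mat) = 1"
proof -
  have "det (row_op :: 'a mat) = prod_list (diag_mat row_op)"
    by (rule det_lower_triangular[OF _ row_op_carrier]) (auto simp: row_op_def dest: rep_lt)
  also have "\<dots> = 1"
    unfolding prod_list_diag_prod by (intro prod.neutral) (auto simp: row_op_def)
  finally show ?thesis .
qed

abbreviation multipartite_laplacian :: "'a::comm_ring_1 \<Rightarrow> 'a mat" where
  "multipartite_laplacian x \<equiv> shifted_laplacian N (\<lambda>i j. blk i \<noteq> blk j) x"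

lemma block_size_le: "block_size N blk b \<le> N"
proof -
  have "block_size N blk b \<le> card {0..<N}"
    unfolding block_size_def by (rule card_mono) auto
  then show ?thesis by simp
qed

lemma card_block_tail:
  assumes b: "b < k"
  shows "card {i \<in> {k..<N}. blk i = b} = block_size N blk b - 1"
proof -
  have "{u. u < N \<and> blk u = b} = insert b {i \<in> {k..<N}. blk i = b}"
  proof (intro equalityI subsetI)
    fix u assume "u \<in> {u. u < N \<and> blk u = b}"
    moreover have "u = b" if "u < k" "blk u = b"
      using blk_rep that by simp
    ultimately show "u \<in> insert b {i \<in> {k..<N}. blk i = b}"
      by (cases "u < k") auto
  qed (use b k_le_N blk_rep in auto)
  then have "block_size N blk b = card (insert b {i \<in> {k..<N}. blk i = b})"
    unfolding block_size_def by (rule arg_cong)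
  also have "\<dots> = Suc (card {i \<in> {k..<N}. blk i = b})"
    using b by (intro card_insert_disjoint) auto
  finally show ?thesis by simp
qed

lemma laplacian_col_op_entry:
  fixes x :: "'a::comm_ring_1"
  assumes z: "z < N" and c: "c < N"
  shows "(multipartite_laplacian x * col_op) $$ (z, c) =
    (if c = 0 then x
     else if c < k then (if blk z = c then x + of_nat (N - block_size N blk c) else - of_nat (block_size N blk c))
     else multipartite_laplacian x $$ (z, c))"
proof -
  let ?L = "multipartite_laplacian x"
  have prod: "(?L * col_op) $$ (z, c) = (\<Sum>w = 0..<N. ?L $$ (z, w) * col_op $$ (w, c))"
    using z c by (simp add: scalar_prod_def)
  consider "c = 0" | "0 < c" "c < k" | "k \<le> c" by linarith
  then show ?thesis
  proof cases
    case 1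
    then have "(?L * col_op) $$ (z, c) = (\<Sum>w = 0..<N. ?L $$ (z, w))"
      unfolding prod using c by (intro sum.cong) (auto simp: col_op_def)
    with 1 z show ?thesis
      by (simp add: sum_multipartite_laplacian_row)
  next
    case 2
    then have "(?L * col_op) $$ (z, c) = (\<Sum>w = 0..<N. if blk w = c then ?L $$ (z, w) else 0)"
      unfolding prod using c by (intro sum.cong) (auto simp: col_op_def)
    also have "\<dots> = (\<Sum>w\<in>{w \<in> {0..<N}. blk w = c}. ?L $$ (z, w))"
      by (rule sum.inter_filter[symmetric]) simp
    finally show ?thesis
      using 2 z by (simp add: sum_multipartite_laplacian_block)
  next
    case 3
    then have "(?L * col_op) $$ (z, c) = (\<Sum>w = 0..<N. if w = c then ?L $$ (z, c) else 0)"
      unfolding prod using c k_pos by (intro sum.cong) (auto simp: col_op_def)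
    with 3 c k_pos show ?thesis
      by simp
  qed
qed

lemma row_op_mult_entry:
  fixes A :: "'a::comm_ring_1 mat"
  assumes A: "A \<in> carrier_mat N N" and i: "i < N" and j: "j < N"
  shows "(row_op * A) $$ (i, j) = A $$ (i, j) - (if 0 < i then A $$ (rep i, j) else 0)"
proof -
  have "(row_op * A) $$ (i, j) = (\<Sum>l = 0..<N. row_op $$ (i, l) * A $$ (l, j))"
    using A i j by (simp add: scalar_prod_def)
  also have "\<dots> = (\<Sum>l = 0..<N. (if l = i then A $$ (i, j) else 0)
      - (if l = rep i then (if 0 < i then A $$ (rep i, j) else 0) else 0))"
    using rep_lt[of i] i by (intro sum.cong) (auto simp: row_op_def)
  also have "\<dots> = A $$ (i, j) - (if 0 < i then A $$ (rep i, j) else 0)"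
    using i rep_lt_N[OF i] by (simp add: sum_subtractf)
  finally show ?thesis .
qed

abbreviation reduced_laplacian :: "'a::comm_ring_1 \<Rightarrow> 'a mat" where
  "reduced_laplacian x \<equiv> row_op * (multipartite_laplacian x * col_op)"

lemma reduced_laplacian_entry:
  assumes "i < N" "j < N"
  shows "reduced_laplacian x $$ (i, j) = (multipartite_laplacian x * col_op) $$ (i, j)
    - (if 0 < i then (multipartite_laplacian x * col_op) $$ (rep i, j) else 0)"
  by (rule row_op_mult_entry[OF carrier_matI]) (simp_all add: assms)

lemma reduced_laplacian_lower:
  fixes x :: "'a::comm_ring_1"
  assumes ji: "j < i" and i: "i < N"
  shows "reduced_laplacian x $$ (i, j) = 0"
proof -
  have j: "j < N" and i_pos: "0 < i"
    using ji i by simp_all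
  note entry = reduced_laplacian_entry[OF i j, of x] laplacian_col_op_entry[OF i j, of x]
    laplacian_col_op_entry[OF rep_lt_N[OF i] j, of x]
  consider "j = 0" | "0 < j" "j < k" | "k \<le> j" by linarith
  then show ?thesis
  proof cases
    case 1
    with entry i_pos show ?thesis by simp
  next
    case 2
    have "blk (rep i) = j \<longleftrightarrow> blk i = j"
      using 2 ji blk_rep_eq[OF i] blk_rep[of i] by auto
    with entry i_pos 2 show ?thesis by simp
  next
    case 3
    have "rep i = blk i" "blk i < k" "blk (blk i) = blk i"
      using 3 ji blk_lt[OF i] blk_rep by (simp_all add: rep_def)
    with entry i_pos 3 ji i show ?thesis
      by (simp add: multipartite_laplacian_entry rep_lt_N)
  qed
qed

lemma reduced_laplacian_diag:
  fixes x :: "'a::comm_ring_1"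
  assumes i: "i < N"
  shows "reduced_laplacian x $$ (i, i) = (if i = 0 then x else if i < k then x + of_nat N
    else x + of_nat (N - block_size N blk (blk i)))"
proof -
  note entry = reduced_laplacian_entry[OF i i, of x] laplacian_col_op_entry[OF i i, of x]
    laplacian_col_op_entry[OF rep_lt_N[OF i] i, of x]
  consider "i = 0" | "0 < i" "i < k" | "k \<le> i" by linarith
  then show ?thesis
  proof cases
    case 1
    with entry show ?thesis by simp
  next
    case 2
    have "rep i = 0" "blk i = i" "blk 0 = 0"
      using 2 blk_rep k_pos by (simp_all add: rep_def)
    moreover have "of_nat (N - block_size N blk i) + of_nat (block_size N blk i) = (of_nat N :: 'a)"
      using block_size_le by (simp flip: of_nat_add)
    ultimately show ?thesis
      using entry 2 by (simp add: algebra_simps)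
  next
    case 3
    have "rep i = blk i" "blk i \<noteq> i" "blk (blk i) = blk i" "blk i < N"
      using 3 blk_lt[OF i] blk_rep k_le_N by (auto simp: rep_def)
    with entry 3 i show ?thesis
      by (simp add: multipartite_laplacian_entry rep_lt_N)
  qed
qed

lemma prod_reduced_laplacian_diag:
  fixes x :: "'a::comm_ring_1"
  shows "(\<Prod>i = 0..<N. if i = 0 then x else if i < k then x + of_nat N
      else x + of_nat (N - block_size N blk (blk i)))
    = x * (x + of_nat N) ^ (k - 1) * (\<Prod>b = 0..<k. (x + of_nat (N - block_size N blk b)) ^ (block_size N blk b - 1))"
    (is "prod ?d _ = _")
proof -
  let ?g = "\<lambda>b. x + of_nat (N - block_size N blk b)"
  have "prod ?d {0..<k} = ?d 0 * prod ?d {Suc 0..<k}"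
    using k_pos by (rule prod.atLeast_Suc_lessThan)
  also have "prod ?d {Suc 0..<k} = (\<Prod>i = Suc 0..<k. x + of_nat N)"
    by (intro prod.cong) auto
  finally have head: "prod ?d {0..<k} = x * (x + of_nat N) ^ (k - 1)"
    by simp
  have block: "(\<Prod>i\<in>{i \<in> {k..<N}. blk i = b}. ?g (blk i)) = ?g b ^ (block_size N blk b - 1)"
    if "b \<in> {0..<k}" for b
  proof -
    have "(\<Prod>i\<in>{i \<in> {k..<N}. blk i = b}. ?g (blk i)) = (\<Prod>i\<in>{i \<in> {k..<N}. blk i = b}. ?g b)"
      by (rule prod.cong) auto
    with that show ?thesis
      using card_block_tail[of b] by simp
  qed
  have "prod ?d {k..<N} = (\<Prod>i = k..<N. ?g (blk i))"
    using k_pos by (intro prod.cong) auto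
  also have "\<dots> = (\<Prod>b = 0..<k. \<Prod>i\<in>{i \<in> {k..<N}. blk i = b}. ?g (blk i))"
    by (rule prod.group[symmetric]) (use blk_lt in auto)
  also have "\<dots> = (\<Prod>b = 0..<k. ?g b ^ (block_size N blk b - 1))"
    using block by (rule prod.cong[OF refl])
  finally have tail: "prod ?d {k..<N} = (\<Prod>b = 0..<k. ?g b ^ (block_size N blk b - 1))" .
  have "prod ?d {0..<N} = prod ?d {0..<k} * prod ?d {k..<N}"
    using k_le_N by (simp add: prod.atLeastLessThan_concat)
  then show ?thesis
    unfolding head tail .
qed

theorem det_multipartite_laplacian:
  fixes x :: "'a::comm_ring_1"
  shows "det (multipartite_laplacian x) = x * (x + of_nat N) ^ (k - 1)
    * (\<Prod>b = 0..<k. (x + of_nat (N - block_size N blk b)) ^ (block_size N blk b - 1))"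
proof -
  have L: "multipartite_laplacian x \<in> carrier_mat N N"
    by (simp add: carrier_matI)
  have "det (reduced_laplacian x) = det row_op * (det (multipartite_laplacian x) * det col_op)"
    using det_mult[OF row_op_carrier mult_carrier_mat[OF L col_op_carrier]]
      det_mult[OF L col_op_carrier] by simp
  then have "det (multipartite_laplacian x) = det (reduced_laplacian x)"
    by (simp add: det_row_op det_col_op)
  also have "\<dots> = prod_list (diag_mat (reduced_laplacian x))"
  proof (rule det_upper_triangular[where n = N])
    show "upper_triangular (reduced_laplacian x)"
      unfolding upper_triangular_def
    proof (intro allI impI)
      fix i j assume "i < dim_row (reduced_laplacian x)" "j < i"
      then show "reduced_laplacian x $$ (i, j) = 0"
        by (intro reduced_laplacian_lower) simp_all
    qed
  qed (simp add: carrier_matI)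
  also have "\<dots> = (\<Prod>i = 0..<N. reduced_laplacian x $$ (i, i))"
    by (simp add: prod_list_diag_prod)
  also have "\<dots> = (\<Prod>i = 0..<N. if i = 0 then x else if i < k then x + of_nat N
      else x + of_nat (N - block_size N blk (blk i)))"
    by (intro prod.cong refl reduced_laplacian_diag) simp
  finally show ?thesis
    unfolding prod_reduced_laplacian_diag .
qed

theorem num_spanning_trees_complete_multipartite:
  assumes "2 \<le> k"
  shows "num_spanning_trees {0..<N} (graph_edges {0..<N} (\<lambda>i j. blk i \<noteq> blk j))
    = N ^ (k - 2) * (\<Prod>b = 0..<k. (N - block_size N blk b) ^ (block_size N blk b - 1))"
proof -
  let ?\<tau> = "num_spanning_trees {0..<N} (graph_edges {0..<N} (\<lambda>i j. blk i \<noteq> blk j))"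
  let ?P = "\<Prod>b = 0..<k. (N - block_size N blk b) ^ (block_size N blk b - 1)"
  let ?X = "monom (1::int) 1"
  let ?R = "(?X + of_nat N) ^ (k - 1) * (\<Prod>b = 0..<k. (?X + of_nat (N - block_size N blk b)) ^ (block_size N blk b - 1))"
  have "int (N * ?\<tau>) = coeff (det (multipartite_laplacian ?X)) 1"
    by (rule coeff_det_shifted_laplacian[symmetric]) (auto simp: symp_def)
  also have "\<dots> = coeff (?X * ?R) 1"
    by (simp add: det_multipartite_laplacian mult.assoc)
  also have "\<dots> = poly ?R 0"
    by (simp add: coeff_monom_mult poly_0_coeff_0)
  also have "\<dots> = int (N ^ (k - 1) * ?P)"
    by (simp add: poly_prod poly_monom)
  finally have "N * ?\<tau> = N ^ (k - 1) * ?P"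
    by (simp only: of_nat_eq_iff)
  moreover have "N ^ (k - 1) = N * N ^ (k - 2)"
    using assms by (simp flip: power_Suc add: Suc_diff_Suc numeral_2_eq_2)
  moreover have "0 < N"
    using assms k_le_N by simp
  ultimately show ?thesis by simp
qed

end

section \<open>The join of two complete bipartite graphs\<close>

lemma graph_edges_image:
  assumes inj: "inj_on h V" and part: "\<And>v. v \<in> V \<Longrightarrow> c (h v) = d v"
  shows "(`) h ` graph_edges V (\<lambda>u v. d u \<noteq> d v) = graph_edges (h ` V) (\<lambda>i j. c i \<noteq> c j)"
proof (intro equalityI subsetI)
  fix e assume "e \<in> (`) h ` graph_edges V (\<lambda>u v. d u \<noteq> d v)"
  then obtain u v where uv: "e = {h u, h v}" "u \<in> V" "v \<in> V" "d u \<noteq> d v"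
    unfolding graph_edges_def by auto
  then have "c (h u) \<noteq> c (h v)"
    using part by simp
  then have "h u \<noteq> h v" by auto
  with uv \<open>c (h u) \<noteq> c (h v)\<close> show "e \<in> graph_edges (h ` V) (\<lambda>i j. c i \<noteq> c j)"
    unfolding graph_edges_def by blast
next
  fix e assume "e \<in> graph_edges (h ` V) (\<lambda>i j. c i \<noteq> c j)"
  then obtain u v where "e = {h u, h v}" "u \<in> V" "v \<in> V" "c (h u) \<noteq> c (h v)"
    unfolding graph_edges_def by auto
  with part have "e = h ` {u, v}" "{u, v} \<in> graph_edges V (\<lambda>u v. d u \<noteq> d v)"
    unfolding graph_edges_def by auto
  then show "e \<in> (`) h ` graph_edges V (\<lambda>u v. d u \<noteq> d v)" by blast
qed

lemma Kbip_E_eq_graph_edges: "Kbip_E m n = graph_edges (Kbip_V m n) (\<lambda>a b. isl a \<noteq> isl b)"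
proof (intro equalityI subsetI)
  fix e assume "e \<in> Kbip_E m n"
  then obtain i j where "e = {Inl i, Inr j}" "i < m" "j < n"
    unfolding Kbip_E_def by blast
  then show "e \<in> graph_edges (Kbip_V m n) (\<lambda>a b. isl a \<noteq> isl b)"
    by (simp add: graph_edgesI Kbip_V_def)
next
  fix e assume "e \<in> graph_edges (Kbip_V m n) (\<lambda>a b. isl a \<noteq> isl b)"
  then obtain a b where "e = {a, b}" "a \<in> Kbip_V m n" "b \<in> Kbip_V m n" "isl a \<noteq> isl b"
    unfolding graph_edges_def by blast
  then show "e \<in> Kbip_E m n"
    unfolding Kbip_E_def Kbip_V_def by (cases a; cases b) (auto simp: insert_commute)
qed

lemma join_E_subset_graph_edges:
  fixes c :: "'a \<Rightarrow> 'c" and d :: "'b \<Rightarrow> 'd" and f :: "'c \<Rightarrow> 'e" and g :: "'d \<Rightarrow> 'e"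
  assumes f: "inj f" and g: "inj g" and fg: "\<And>a b. f a \<noteq> g b"
  defines "part \<equiv> case_sum (f \<circ> c) (g \<circ> d)"
  shows "join_E V (graph_edges V (\<lambda>a b. c a \<noteq> c b)) W (graph_edges W (\<lambda>a b. d a \<noteq> d b))
    \<subseteq> graph_edges (join_V V W) (\<lambda>u v. part u \<noteq> part v)"
proof
  fix e assume "e \<in> join_E V (graph_edges V (\<lambda>a b. c a \<noteq> c b)) W (graph_edges W (\<lambda>a b. d a \<noteq> d b))"
  then consider a b where "e = {Inl a, Inl b}" "a \<in> V" "b \<in> V" "c a \<noteq> c b"
    | a b where "e = {Inr a, Inr b}" "a \<in> W" "b \<in> W" "d a \<noteq> d b"
    | a b where "e = {Inl a, Inr b}" "a \<in> V" "b \<in> W"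
    unfolding join_E_def graph_edges_def by blast
  then show "e \<in> graph_edges (join_V V W) (\<lambda>u v. part u \<noteq> part v)"
  proof cases
    case 1
    with f show ?thesis
      by (auto simp: part_def join_V_def dest: injD intro!: graph_edgesI)
  next
    case 2
    with g show ?thesis
      by (auto simp: part_def join_V_def dest: injD intro!: graph_edgesI)
  next
    case 3
    with fg show ?thesis
      by (auto simp: part_def join_V_def intro!: graph_edgesI)
  qed
qed

lemma graph_edges_subset_join_E:
  fixes c :: "'a \<Rightarrow> 'c" and d :: "'b \<Rightarrow> 'd" and f :: "'c \<Rightarrow> 'e" and g :: "'d \<Rightarrow> 'e"
  defines "part \<equiv> case_sum (f \<circ> c) (g \<circ> d)"
  shows "graph_edges (join_V V W) (\<lambda>u v. part u \<noteq> part v)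
    \<subseteq> join_E V (graph_edges V (\<lambda>a b. c a \<noteq> c b)) W (graph_edges W (\<lambda>a b. d a \<noteq> d b))"
proof
  fix e assume "e \<in> graph_edges (join_V V W) (\<lambda>u v. part u \<noteq> part v)"
  then obtain u v where e: "e = {u, v}" and uv: "u \<in> join_V V W" "v \<in> join_V V W" "part u \<noteq> part v"
    unfolding graph_edges_def by blast
  show "e \<in> join_E V (graph_edges V (\<lambda>a b. c a \<noteq> c b)) W (graph_edges W (\<lambda>a b. d a \<noteq> d b))"
  proof (cases u; cases v)
    fix a b assume "u = Inl a" "v = Inl b"
    with uv have "{a, b} \<in> graph_edges V (\<lambda>a b. c a \<noteq> c b)"
      by (auto simp: part_def join_V_def intro!: graph_edgesI)
    then have "Inl ` {a, b} \<in> (\<lambda>e. Inl ` e) ` graph_edges V (\<lambda>a b. c a \<noteq> c b)"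
      by (rule imageI)
    then show ?thesis
      unfolding e join_E_def using \<open>u = Inl a\<close> \<open>v = Inl b\<close> by (intro UnI1[OF UnI1]) simp
  next
    fix a b assume "u = Inl a" "v = Inr b"
    with uv show ?thesis
      unfolding e join_E_def join_V_def by blast
  next
    fix a b assume "u = Inr a" "v = Inl b"
    with uv show ?thesis
      unfolding e join_E_def join_V_def by (auto simp: insert_commute)
  next
    fix a b assume "u = Inr a" "v = Inr b"
    with uv have "{a, b} \<in> graph_edges W (\<lambda>a b. d a \<noteq> d b)"
      by (auto simp: part_def join_V_def intro!: graph_edgesI)
    then have "Inr ` {a, b} \<in> (\<lambda>e. Inr ` e) ` graph_edges W (\<lambda>a b. d a \<noteq> d b)"
      by (rule imageI)
    then show ?thesis
      unfolding e join_E_def using \<open>u = Inr a\<close> \<open>v = Inr b\<close> by (intro UnI1[OF UnI2]) simp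
  qed
qed

definition join_part :: "(nat + nat) + (nat + nat) \<Rightarrow> nat" where
  "join_part = case_sum (\<lambda>a. if isl a then 0 else 1) (\<lambda>b. if isl b then 2 else 3)"

lemma join_E_Kbip_eq_graph_edges:
  "join_E (Kbip_V m n) (Kbip_E m n) (Kbip_V p q) (Kbip_E p q)
    = graph_edges (join_V (Kbip_V m n) (Kbip_V p q)) (\<lambda>u v. join_part u \<noteq> join_part v)"
proof -
  let ?f = "\<lambda>b. if b then 0 else 1 :: nat" and ?g = "\<lambda>b. if b then 2 else 3 :: nat"
  have part: "join_part = case_sum (?f \<circ> isl) (?g \<circ> isl)"
    by (auto simp: join_part_def fun_eq_iff split: sum.split)
  show ?thesis
    unfolding Kbip_E_eq_graph_edges part
    by (intro equalityI join_E_subset_graph_edges graph_edges_subset_join_E)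
      (auto simp: inj_def split: if_splits)
qed

text \<open>The first vertex of each side of \<open>K\<^sub>m\<^sub>,\<^sub>n \<or> K\<^sub>p\<^sub>,\<^sub>q\<close> gets the label of its side,
  as \<open>block_labelling\<close> requires; the other vertices fill \<open>4, 5, \<dots>\<close> side by side.\<close>
definition join_label :: "nat \<Rightarrow> nat \<Rightarrow> nat \<Rightarrow> (nat + nat) + (nat + nat) \<Rightarrow> nat" where
  "join_label m n p v = (case v of
      Inl (Inl i) \<Rightarrow> if i = 0 then 0 else 3 + i
    | Inl (Inr j) \<Rightarrow> if j = 0 then 1 else 2 + m + j
    | Inr (Inl i) \<Rightarrow> if i = 0 then 2 else 1 + m + n + i
    | Inr (Inr j) \<Rightarrow> if j = 0 then 3 else m + n + p + j)"

definition join_block :: "nat \<Rightarrow> nat \<Rightarrow> nat \<Rightarrow> nat \<Rightarrow> nat" where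
  "join_block m n p i = (if i < 4 then i else if i < 3 + m then 0 else if i < 2 + m + n then 1
     else if i < 1 + m + n + p then 2 else 3)"

lemma mem_join_V_Kbip:
  "v \<in> join_V (Kbip_V m n) (Kbip_V p q) \<longleftrightarrow>
    (case v of Inl (Inl i) \<Rightarrow> i < m | Inl (Inr j) \<Rightarrow> j < n | Inr (Inl i) \<Rightarrow> i < p | Inr (Inr j) \<Rightarrow> j < q)"
  unfolding join_V_def Kbip_V_def by (auto split: sum.splits)

lemma card_join_V_Kbip: "card (join_V (Kbip_V m n) (Kbip_V p q)) = m + n + p + q"
  unfolding join_V_def Kbip_V_def Plus_def[symmetric] by (simp add: card_Plus)

context
  fixes m n p q :: nat
  assumes pos: "0 < m" "0 < n" "0 < p" "0 < q"
begin

lemma join_label_lt: "v \<in> join_V (Kbip_V m n) (Kbip_V p q) \<Longrightarrow> join_label m n p v < m + n + p + q"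
  using pos unfolding mem_join_V_Kbip join_label_def by (auto split: sum.splits)

lemma join_block_join_label:
  "v \<in> join_V (Kbip_V m n) (Kbip_V p q) \<Longrightarrow> join_block m n p (join_label m n p v) = join_part v"
  using pos unfolding mem_join_V_Kbip join_label_def join_block_def join_part_def
  by (auto split: sum.splits)

lemma inj_on_join_label: "inj_on (join_label m n p) (join_V (Kbip_V m n) (Kbip_V p q))"
  using pos unfolding inj_on_def join_label_def by (auto simp: mem_join_V_Kbip split: sum.splits if_splits)

lemma join_label_image:
  "join_label m n p ` join_V (Kbip_V m n) (Kbip_V p q) = {0..<m + n + p + q}"
proof (rule card_subset_eq)
  show "join_label m n p ` join_V (Kbip_V m n) (Kbip_V p q) \<subseteq> {0..<m + n + p + q}"
    using join_label_lt by auto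
  show "card (join_label m n p ` join_V (Kbip_V m n) (Kbip_V p q)) = card {0..<m + n + p + q}"
    using card_image[OF inj_on_join_label] card_join_V_Kbip by simp
qed simp

lemma num_spanning_trees_join_Kbip:
  "num_spanning_trees (join_V (Kbip_V m n) (Kbip_V p q))
      (join_E (Kbip_V m n) (Kbip_E m n) (Kbip_V p q) (Kbip_E p q))
    = num_spanning_trees {0..<m + n + p + q}
        (graph_edges {0..<m + n + p + q} (\<lambda>i j. join_block m n p i \<noteq> join_block m n p j))"
proof -
  let ?E = "join_E (Kbip_V m n) (Kbip_E m n) (Kbip_V p q) (Kbip_E p q)"
  have "(`) (join_label m n p) ` ?E
      = graph_edges {0..<m + n + p + q} (\<lambda>i j. join_block m n p i \<noteq> join_block m n p j)"
    unfolding join_E_Kbip_eq_graph_edges join_label_image[symmetric]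
    by (rule graph_edges_image[where c = "join_block m n p" and d = join_part,
          OF inj_on_join_label join_block_join_label])
  moreover have "\<forall>e\<in>?E. e \<subseteq> join_V (Kbip_V m n) (Kbip_V p q)"
    unfolding join_E_Kbip_eq_graph_edges graph_edges_def by blast
  ultimately show ?thesis
    using num_spanning_trees_image[OF inj_on_join_label] join_label_image by metis
qed

lemma block_labelling_join_block: "block_labelling (m + n + p + q) 4 (join_block m n p)"
  by unfold_locales (use pos in \<open>auto simp: join_block_def\<close>)

lemma block_size_join_block:
  "block_size (m + n + p + q) (join_block m n p) 0 = m"
  "block_size (m + n + p + q) (join_block m n p) 1 = n"
  "block_size (m + n + p + q) (join_block m n p) 2 = p"
  "block_size (m + n + p + q) (join_block m n p) 3 = q"
proof -
  have "{u. u < m + n + p + q \<and> join_block m n p u = 0} = insert 0 {4..<3 + m}"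
    "{u. u < m + n + p + q \<and> join_block m n p u = 1} = insert 1 {3 + m..<2 + m + n}"
    "{u. u < m + n + p + q \<and> join_block m n p u = 2} = insert 2 {2 + m + n..<1 + m + n + p}"
    "{u. u < m + n + p + q \<and> join_block m n p u = 3} = insert 3 {1 + m + n + p..<m + n + p + q}"
    using pos unfolding join_block_def by auto
  with pos show "block_size (m + n + p + q) (join_block m n p) 0 = m"
    "block_size (m + n + p + q) (join_block m n p) 1 = n"
    "block_size (m + n + p + q) (join_block m n p) 2 = p"
    "block_size (m + n + p + q) (join_block m n p) 3 = q"
    unfolding block_size_def by simp_all
qed

end

theorem corollary4p2:
  fixes m n p q :: nat
  assumes "m > 0" "n > 0" "p > 0" "q > 0"
  shows "num_spanning_trees (join_V (Kbip_V m n) (Kbip_V p q))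
           (join_E (Kbip_V m n) (Kbip_E m n) (Kbip_V p q) (Kbip_E p q))
         = (m+n+p+q)^2 * (m+p+q)^(n-1) * (n+p+q)^(m-1) * (p+m+n)^(q-1) * (q+m+n)^(p-1)"
proof -
  let ?N = "m + n + p + q" and ?blk = "join_block m n p"
  have prod_four: "(\<Prod>b = 0..<4. g b) = g 0 * g 1 * g 2 * g 3" for g :: "nat \<Rightarrow> nat"
    by (simp add: eval_nat_numeral prod.atLeast0_lessThan_Suc)
  have "num_spanning_trees (join_V (Kbip_V m n) (Kbip_V p q))
      (join_E (Kbip_V m n) (Kbip_E m n) (Kbip_V p q) (Kbip_E p q))
    = num_spanning_trees {0..<?N} (graph_edges {0..<?N} (\<lambda>i j. ?blk i \<noteq> ?blk j))"
    by (rule num_spanning_trees_join_Kbip[OF assms])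
  also have "\<dots> = ?N ^ 2 * (\<Prod>b = 0..<4. (?N - block_size ?N ?blk b) ^ (block_size ?N ?blk b - 1))"
    using block_labelling.num_spanning_trees_complete_multipartite[OF block_labelling_join_block[OF assms]]
    by simp
  also have "\<dots> = (m+n+p+q)^2 * (m+p+q)^(n-1) * (n+p+q)^(m-1) * (p+m+n)^(q-1) * (q+m+n)^(p-1)"
    unfolding prod_four block_size_join_block[OF assms] by (simp add: ac_simps)
  finally show ?thesis .
qed

end
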